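(* Consider the following networked control setting. Let $f_p:\mathbb{R}^{n_p}\times\mathbb{R}^{m_p}\to\mathbb{R}^{n_p}$ with $f_p(0,0)=0$, closed sets $\mathbb{X}_p\subseteq\mathbb{R}^{n_p}$, $\mathbb{U}_p\subseteq\mathbb{R}^{m_p}$ containing the origin, $Q,R>0$, and integers $g\in\mathbb{I}_{\geq1}$, $c\in\mathbb{I}_{\geq g}$, $b\in\mathbb{I}_{\geq c}$ with $q:=\lceil c/g\rceil\geq2$. The overall state is $x=(x_p,u_s,\beta)\in\mathbb{X}:=\mathbb{X}_p\times\mathbb{U}_p\times\mathbb{I}_{[0,b]}$, the input $u=(u_c,\gamma,\delta)\in\mathbb{U}:=\mathbb{U}_p\times\{(\gamma,\delta)\in\{0,1\}^2:\gamma+\delta\leq1\}$, and the dynamics are $x(k+1)=f(x(k),u(k))$ with $$f(x,u)=\big(f_p(x_p,(\gamma+\delta)u_c+(1-\gamma-\delta)u_s),\ (\gamma+\delta)u_c+(1-\gamma-\delta)u_s,\ \min\{\beta+(1-\delta)g-\gamma c,b\}\big).$$ For $\psi>0$ the stage cost is $\ell(x,u)=\|x_p\|_Q^2+(\gamma+\delta)\|u_c\|_R^2+(1-\gamma-\delta)\|u_s\|_R^2+\psi(b^2-\beta^2)$. For $u_c\in\mathbb{U}_p$ define $f_{p,0}(x_p,u_c):=x_p$, $f_{p,i}(x_p,u_c):=f_p(f_{p,i-1}(x_p,u_c),u_c)$. Assume: (A1) there exist a closed set $\mathbb{X}_{f,p}\subseteq\mathbb{X}_p$ containing the origin and $k_p:\mathbb{X}_{f,p}\to\mathbb{U}_p$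 such that for all $x_p\in\mathbb{X}_{f,p}$: $f_{p,i}(x_p,k_p(x_p))\in\mathbb{X}_p$ for all $i\in\mathbb{I}_{[1,q-1]}$ and $f_{p,q}(x_p,k_p(x_p))\in\mathbb{X}_{f,p}$; (A2) there is a continuous positive definite $V_{f,p}:\mathbb{X}_{f,p}\to\mathbb{R}$ with, for all $x_p\in\mathbb{X}_{f,p}$, $V_{f,p}(f_{p,q}(x_p,k_p(x_p)))-V_{f,p}(x_p)\leq -q\|k_p(x_p)\|_R^2-\sum_{i=0}^{q-1}\|f_{p,i}(x_p,k_p(x_p))\|_Q^2$; (A4) $\sigma>0$ satisfies $\sigma\geq\psi\big(qb^2-\tfrac16g^2(q-1)(q-2)(2q-3)\big)$. Let $V_f(x):=V_{f,p}(x_p)+\sigma(b^2-\beta^2)$ and $\mathbb{X}_f:=\mathbb{X}_{f,p}\times\mathbb{U}_p\times\mathbb{I}_{[0,b]}$. Fix $r\in\mathbb{I}_{\geq1}$, $M:=rq$, $N\in\mathbb{I}_{\geq M}$. The closed loop is generated by the rollout scheme: at each $k=jM$, $j\in\mathbb{I}_{\geq0}$, solve $\mathbb{P}(x(jM))$: minimize $\sum_{i=0}^{N-1}\ell(x(i|jM),u(i|jM))+V_f(x(N|jM))$ over $u(0|jM),\dots,u(N-1|jM)$ subject to $x(i+1|jM)=f(x(i|jM),u(i|jM))$, $x(i|jM)\in\mathbb{X}$, $u(i|jM)\in\mathbb{U}$ for $i\in\mathbb{I}_{[0,N-1]}$, $x(0|jM)=x(jM)$, $x(N|jM)\in\mathbb{X}_f$,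 with optimizer $u^*(\cdot|jM)$, and apply $u(jM+i)=u^*(i|jM)$ for $i\in\mathbb{I}_{[0,M-1]}$. Then, if $\mathbb{P}(x(0))$ is feasible, $\mathbb{P}(x(jM))$ is feasible for all $j\in\mathbb{I}_{\geq0}$ and the overall closed-loop state $x(k)$ converges to $(0,0,b)$ as $k\to\infty$.
   Context: $\mathbb{I}$ denotes the integers, $\mathbb{I}_{[a,b]}:=\mathbb{I}\cap[a,b]$, $\mathbb{I}_{\geq a}:=\mathbb{I}\cap[a,\infty)$, $\|v\|_A^2:=v^TAv$, $A>0$ means positive definite. Here $x_p$ is the plant state, $u_s$ the last applied (held) input, $\beta$ the token level of a token bucket (size $b$, rate $g$, cost $c$); $\gamma=1$ is a transmission over the token-bucket-constrained network and $\delta=1$ a transmission over a direct link which consumes no tokens and during which no tokens are added. "Feasible" means the constraint set is nonempty. *)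

theory Defs
  imports "HOL-Analysis.Analysis"
begin

definition qf :: "real^'n^'n \<Rightarrow> real^'n \<Rightarrow> real" where
  "qf A v = v \<bullet> (A *v v)"

definition pos_def_mat :: "real^'n^'n \<Rightarrow> bool" where
  "pos_def_mat A \<longleftrightarrow> (\<forall>v. v \<noteq> 0 \<longrightarrow> qf A v > 0)"

definition pos_def_fun :: "('a::real_vector) set \<Rightarrow> ('a \<Rightarrow> real) \<Rightarrow> bool" where
  "pos_def_fun S V \<longleftrightarrow> V 0 = 0 \<and> (\<forall>x\<in>S. x \<noteq> 0 \<longrightarrow> V x > 0)"

definition fpi :: "('x \<Rightarrow> 'u \<Rightarrow> 'x) \<Rightarrow> nat \<Rightarrow> 'x \<Rightarrow> 'u \<Rightarrow> 'x" where
  "fpi fp i xp uc = ((\<lambda>z. fp z uc) ^^ i) xp"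

type_synonym ('n,'m) st = "(real^'n) \<times> (real^'m) \<times> int"
type_synonym 'm inp = "(real^'m) \<times> int \<times> int"

definition dyn :: "(real^'n \<Rightarrow> real^'m \<Rightarrow> real^'n) \<Rightarrow> int \<Rightarrow> int \<Rightarrow> int
    \<Rightarrow> ('n,'m) st \<Rightarrow> 'm inp \<Rightarrow> ('n,'m) st" where
  "dyn fp g c b x u =
     (case x of (xp, us, \<beta>) \<Rightarrow> case u of (uc, \<gamma>, \<delta>) \<Rightarrow>
        let ua = real_of_int (\<gamma> + \<delta>) *\<^sub>R uc + real_of_int (1 - \<gamma> - \<delta>) *\<^sub>R us
        in (fp xp ua, ua, min (\<beta> + (1 - \<delta>) * g - \<gamma> * c) b))"

definition stage_cost :: "real^'n^'n \<Rightarrow> real^'m^'m \<Rightarrow> real \<Rightarrow> int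
    \<Rightarrow> ('n,'m) st \<Rightarrow> 'm inp \<Rightarrow> real" where
  "stage_cost Q R \<psi> b x u =
     (case x of (xp, us, \<beta>) \<Rightarrow> case u of (uc, \<gamma>, \<delta>) \<Rightarrow>
        qf Q xp + real_of_int (\<gamma> + \<delta>) * qf R uc + real_of_int (1 - \<gamma> - \<delta>) * qf R us
        + \<psi> * (real_of_int b ^ 2 - real_of_int \<beta> ^ 2))"

definition state_set :: "(real^'n) set \<Rightarrow> (real^'m) set \<Rightarrow> int \<Rightarrow> ('n,'m) st set" where
  "state_set Xp Up b = Xp \<times> Up \<times> {0..b}"

definition input_set :: "(real^'m) set \<Rightarrow> 'm inp set" where
  "input_set Up = Up \<times> {(\<gamma>, \<delta>). \<gamma> \<in> {0,1} \<and> \<delta> \<in> {0,1} \<and> \<gamma> + \<delta> \<le> 1}"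

definition term_cost :: "(real^'n \<Rightarrow> real) \<Rightarrow> real \<Rightarrow> int \<Rightarrow> ('n,'m) st \<Rightarrow> real" where
  "term_cost Vfp \<sigma> b x = (case x of (xp, us, \<beta>) \<Rightarrow>
      Vfp xp + \<sigma> * (real_of_int b ^ 2 - real_of_int \<beta> ^ 2))"

fun traj :: "('s \<Rightarrow> 'i \<Rightarrow> 's) \<Rightarrow> 's \<Rightarrow> (nat \<Rightarrow> 'i) \<Rightarrow> nat \<Rightarrow> 's" where
  "traj f x0 us 0 = x0"
| "traj f x0 us (Suc i) = f (traj f x0 us i) (us i)"

definition ocp_admissible :: "(real^'n \<Rightarrow> real^'m \<Rightarrow> real^'n) \<Rightarrow> int \<Rightarrow> int \<Rightarrow> int
    \<Rightarrow> (real^'n) set \<Rightarrow> (real^'m) set \<Rightarrow> (real^'n) set \<Rightarrow> nat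
    \<Rightarrow> ('n,'m) st \<Rightarrow> (nat \<Rightarrow> 'm inp) \<Rightarrow> bool" where
  "ocp_admissible fp g c b Xp Up Xfp N x0 us \<longleftrightarrow>
     (\<forall>i<N. traj (dyn fp g c b) x0 us i \<in> state_set Xp Up b \<and> us i \<in> input_set Up)
     \<and> traj (dyn fp g c b) x0 us N \<in> state_set Xfp Up b"

definition ocp_feasible :: "(real^'n \<Rightarrow> real^'m \<Rightarrow> real^'n) \<Rightarrow> int \<Rightarrow> int \<Rightarrow> int
    \<Rightarrow> (real^'n) set \<Rightarrow> (real^'m) set \<Rightarrow> (real^'n) set \<Rightarrow> nat \<Rightarrow> ('n,'m) st \<Rightarrow> bool" where
  "ocp_feasible fp g c b Xp Up Xfp N x0 \<longleftrightarrow> (\<exists>us. ocp_admissible fp g c b Xp Up Xfp N x0 us)"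

definition ocp_cost :: "(real^'n \<Rightarrow> real^'m \<Rightarrow> real^'n) \<Rightarrow> int \<Rightarrow> int \<Rightarrow> int
    \<Rightarrow> real^'n^'n \<Rightarrow> real^'m^'m \<Rightarrow> real \<Rightarrow> (real^'n \<Rightarrow> real) \<Rightarrow> real \<Rightarrow> nat
    \<Rightarrow> ('n,'m) st \<Rightarrow> (nat \<Rightarrow> 'm inp) \<Rightarrow> real" where
  "ocp_cost fp g c b Q R \<psi> Vfp \<sigma> N x0 us =
     (\<Sum>i<N. stage_cost Q R \<psi> b (traj (dyn fp g c b) x0 us i) (us i))
     + term_cost Vfp \<sigma> b (traj (dyn fp g c b) x0 us N)"

definition ocp_optimal :: "(real^'n \<Rightarrow> real^'m \<Rightarrow> real^'n) \<Rightarrow> int \<Rightarrow> int \<Rightarrow> int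
    \<Rightarrow> (real^'n) set \<Rightarrow> (real^'m) set \<Rightarrow> (real^'n) set
    \<Rightarrow> real^'n^'n \<Rightarrow> real^'m^'m \<Rightarrow> real \<Rightarrow> (real^'n \<Rightarrow> real) \<Rightarrow> real \<Rightarrow> nat
    \<Rightarrow> ('n,'m) st \<Rightarrow> (nat \<Rightarrow> 'm inp) \<Rightarrow> bool" where
  "ocp_optimal fp g c b Xp Up Xfp Q R \<psi> Vfp \<sigma> N x0 us \<longleftrightarrow>
     ocp_admissible fp g c b Xp Up Xfp N x0 us \<and>
     (\<forall>us'. ocp_admissible fp g c b Xp Up Xfp N x0 us' \<longrightarrow>
        ocp_cost fp g c b Q R \<psi> Vfp \<sigma> N x0 us \<le> ocp_cost fp g c b Q R \<psi> Vfp \<sigma> N x0 us')"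

end

theory Submission
  imports Defs
begin

text \<open>
  Along a terminal block -- transmit \<open>k\<^sub>p(x\<^sub>p)\<close> once over the direct link, then hold it for
  \<open>q - 1\<close> steps -- the state stays in \<open>\<X>\<close> and returns to \<open>\<X>\<^sub>f\<close> (A1), the plant part of
  \<open>V\<^sub>f\<close> drops by at least the plant stage costs (A2), and the token part drops by at least
  the token penalties (A4): the bucket refills from level at least \<open>(i - 1) g\<close> after
  \<open>i\<close> steps, and \<open>b\<^sup>2 - \<beta>\<^sup>2\<close> falls by at least \<open>1\<close> unless \<open>\<beta> = b\<close>.
  Appending \<open>r\<close> such blocks to the tail of the optimal input sequence of \<open>\<P>(x(jM))\<close> gives
  a feasible candidate for \<open>\<P>(x((j+1)M))\<close> whose cost is the optimal cost minus the first
  \<open>M\<close> stage costs. Hence the optimal costs are nonnegative and decrease by the closed-loop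
  stage costs, which are therefore summable and tend to zero. As \<open>Q, R > 0\<close> and \<open>\<beta>\<close> is
  integer valued, this forces \<open>x\<^sub>p, u\<^sub>s \<rightarrow> 0\<close> and eventually \<open>\<beta> = b\<close>.
\<close>

lemma sum_lessThan_add: "(\<Sum>i<a + b. f i) = (\<Sum>i<a. f i) + (\<Sum>i<b. f (a + i))"
  for f :: "nat \<Rightarrow> 'a::comm_monoid_add"
  by (induction b) (simp_all add: add.assoc)

lemma sum_squares_pred:
  assumes "1 \<le> q"
  shows "(\<Sum>i<q. real (i - 1) ^ 2) = (real q - 1) * (real q - 2) * (2 * real q - 3) / 6"
  using assms
proof (induction q rule: dec_induct)
  case base
  then show ?case by simp
next
  case (step n)
  then have "real (n - 1) = real n - 1" by simp
  with step.IH show ?case by (simp add: field_simps power2_eq_square)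
qed

lemma summable_of_blockwise_decrease:
  fixes l V :: "nat \<Rightarrow> real"
  assumes "M > 0" and l: "\<And>k. l k \<ge> 0" and V: "\<And>j. V j \<ge> 0"
    and decrease: "\<And>j. V (Suc j) \<le> V j - (\<Sum>i<M. l (j * M + i))"
  shows "summable l"
proof (rule summableI_nonneg_bounded)
  have partial: "(\<Sum>k<j * M. l k) \<le> V 0 - V j" for j
  proof (induction j)
    case (Suc j)
    have "Suc j * M = j * M + M" by simp
    then have "(\<Sum>k<Suc j * M. l k) = (\<Sum>k<j * M. l k) + (\<Sum>i<M. l (j * M + i))"
      by (simp only: sum_lessThan_add)
    with Suc decrease[of j] show ?case by linarith
  qed simp
  fix n
  have "(\<Sum>k<n. l k) \<le> (\<Sum>k<n * M. l k)"
    using \<open>M > 0\<close> l by (intro sum_mono2) auto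
  also have "\<dots> \<le> V 0" using partial[of n] V[of n] by linarith
  finally show "(\<Sum>k<n. l k) \<le> V 0" .
qed (fact l)

lemma int_tendsto_of_square_gap:
  fixes \<beta> :: "nat \<Rightarrow> int"
  assumes bounds: "\<And>k. 0 \<le> \<beta> k" "\<And>k. \<beta> k \<le> b"
    and gap: "(\<lambda>k. real_of_int b ^ 2 - real_of_int (\<beta> k) ^ 2) \<longlonglongrightarrow> 0"
  shows "\<beta> \<longlonglongrightarrow> b"
proof (rule tendsto_eventually)
  have "eventually (\<lambda>k. real_of_int b ^ 2 - real_of_int (\<beta> k) ^ 2 < 1) sequentially"
    using gap by (rule order_tendstoD) simp
  then show "eventually (\<lambda>k. \<beta> k = b) sequentially"
  proof (rule eventually_mono)
    fix k
    assume small: "real_of_int b ^ 2 - real_of_int (\<beta> k) ^ 2 < 1"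
    show "\<beta> k = b"
    proof (rule ccontr)
      assume "\<beta> k \<noteq> b"
      then have "\<beta> k ^ 2 < b ^ 2"
        using bounds[of k] by (intro power_strict_mono) auto
      then have "real_of_int (\<beta> k ^ 2 + 1) \<le> real_of_int (b ^ 2)" by linarith
      with small show False by simp
    qed
  qed
qed

lemma traj_add: "traj f x0 us (a + i) = traj f (traj f x0 us a) (\<lambda>k. us (a + k)) i"
  by (induction i) auto

definition append_seq :: "nat \<Rightarrow> (nat \<Rightarrow> 'a) \<Rightarrow> (nat \<Rightarrow> 'a) \<Rightarrow> nat \<Rightarrow> 'a" where
  "append_seq a v w k = (if k < a then v k else w (k - a))"

lemma traj_append_seq_le: "i \<le> a \<Longrightarrow> traj f x0 (append_seq a v w) i = traj f x0 v i"
  by (induction i) (auto simp: append_seq_def)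

lemma traj_append_seq_add: "traj f x0 (append_seq a v w) (a + i) = traj f (traj f x0 v a) w i"
  by (induction i) (simp add: traj_append_seq_le, simp add: append_seq_def)

lemma qf_zero [simp]: "qf A 0 = 0"
  by (simp add: qf_def)

lemma qf_scaleR: "qf A (t *\<^sub>R v) = t\<^sup>2 * qf A v"
  by (simp add: qf_def matrix_vector_mult_scaleR power2_eq_square)

lemma qf_nonneg: "pos_def_mat A \<Longrightarrow> qf A v \<ge> 0"
  unfolding pos_def_mat_def by (cases "v = 0") (auto intro: less_imp_le)

lemma pos_def_mat_qf_lower_bound:
  fixes A :: "real^'n^'n"
  assumes "pos_def_mat A"
  obtains l where "l > 0" "\<And>v. l * (norm v)\<^sup>2 \<le> qf A v"
proof -
  let ?S = "sphere (0::real^'n) 1"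
  have "continuous_on ?S (qf A)"
    unfolding qf_def by (intro continuous_intros matrix_vector_mult_linear_continuous_on)
  then obtain v where v: "v \<in> ?S" and min: "\<And>y. y \<in> ?S \<Longrightarrow> qf A v \<le> qf A y"
    using continuous_attains_inf[of ?S "qf A"] by auto
  have "v \<noteq> 0" using v by auto
  then have "qf A v > 0" using assms unfolding pos_def_mat_def by blast
  moreover have "qf A v * (norm w)\<^sup>2 \<le> qf A w" for w
  proof (cases "w = 0")
    case False
    then have "qf A v \<le> qf A ((1 / norm w) *\<^sub>R w)" by (intro min) simp
    also have "\<dots> = qf A w / (norm w)\<^sup>2" by (simp add: qf_scaleR power_divide)
    finally show ?thesis using False by (simp add: field_simps)
  qed simp
  ultimately show ?thesis using that by blast
qed

lemma qf_tendsto_zero_imp_tendsto_zero: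
  fixes A :: "real^'n^'n"
  assumes "pos_def_mat A" and "(\<lambda>k. qf A (f k)) \<longlonglongrightarrow> 0"
  shows "f \<longlonglongrightarrow> 0"
proof -
  obtain l where l: "l > 0" "\<And>v. l * (norm v)\<^sup>2 \<le> qf A v"
    using pos_def_mat_qf_lower_bound[OF assms(1)] by blast
  have "\<forall>k. norm ((norm (f k))\<^sup>2) \<le> qf A (f k) / l"
    using l by (simp add: field_simps mult.commute)
  then have "(\<lambda>k. (norm (f k))\<^sup>2) \<longlonglongrightarrow> 0"
    using Lim_null_comparison[of "\<lambda>k. (norm (f k))\<^sup>2" "\<lambda>k. qf A (f k) / l"]
      tendsto_divide_zero[OF assms(2)] by (simp add: always_eventually)
  then have "(\<lambda>k. sqrt ((norm (f k))\<^sup>2)) \<longlonglongrightarrow> 0"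
    using tendsto_real_sqrt by fastforce
  then show ?thesis by (simp add: tendsto_norm_zero_iff)
qed

text \<open>Token level \<open>i\<close> steps into a terminal block started at level \<open>\<beta>\<close>: the first step
  uses the direct link, which adds no tokens, and every later step holds the input and
  adds \<open>g\<close>.\<close>
definition token_level :: "int \<Rightarrow> int \<Rightarrow> int \<Rightarrow> nat \<Rightarrow> int" where
  "token_level g b \<beta> i = (if i = 0 then \<beta> else min (\<beta> + (int i - 1) * g) b)"

locale ocp_data =
  fixes fp :: "real^'n \<Rightarrow> real^'m \<Rightarrow> real^'n"
    and Xp :: "(real^'n) set" and Up :: "(real^'m) set"
    and Q :: "real^'n^'n" and R :: "real^'m^'m"
    and g c b :: int
    and \<psi> \<sigma> :: real
    and Xfp :: "(real^'n) set" and Vfp :: "real^'n \<Rightarrow> real"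
begin

abbreviation "F \<equiv> dyn fp g c b"
abbreviation "ell \<equiv> stage_cost Q R \<psi> b"
abbreviation Vf :: "('n,'m) st \<Rightarrow> real" where "Vf \<equiv> term_cost Vfp \<sigma> b"
abbreviation "X \<equiv> state_set Xp Up b"
abbreviation "Xf \<equiv> state_set Xfp Up b"
abbreviation "U \<equiv> input_set Up"
abbreviation "admissible \<equiv> ocp_admissible fp g c b Xp Up Xfp"
abbreviation "feasible \<equiv> ocp_feasible fp g c b Xp Up Xfp"
abbreviation "cost \<equiv> ocp_cost fp g c b Q R \<psi> Vfp \<sigma>"
abbreviation "optimal \<equiv> ocp_optimal fp g c b Xp Up Xfp Q R \<psi> Vfp \<sigma>"

lemma admissible_shift:
  assumes "admissible (M + L) z us"
  shows "admissible L (traj F z us M) (\<lambda>k. us (M + k))"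
  using assms unfolding ocp_admissible_def by (simp flip: traj_add)

lemma cost_shift:
  "cost (M + L) z us
     = (\<Sum>i<M. ell (traj F z us i) (us i)) + cost L (traj F z us M) (\<lambda>k. us (M + k))"
  unfolding ocp_cost_def by (simp add: sum_lessThan_add traj_add)

lemma admissible_append:
  assumes v: "admissible L z v" and w: "admissible K (traj F z v L) w"
  shows "admissible (L + K) z (append_seq L v w)"
proof -
  have "traj F z (append_seq L v w) i \<in> X \<and> append_seq L v w i \<in> U" if "i < L + K" for i
  proof (cases "i < L")
    case True
    then show ?thesis
      using v traj_append_seq_le[of i L F z v w]
      unfolding ocp_admissible_def append_seq_def by simp
  next
    case False
    then have "i = L + (i - L)" "i - L < K" using that by simp_all
    then show ?thesis
      using w traj_append_seq_add[of F z L v w "i - L"] unfolding ocp_admissible_def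
      by (metis add_diff_cancel_left' append_seq_def not_add_less1)
  qed
  moreover have "traj F z (append_seq L v w) (L + K) \<in> Xf"
    using w by (simp add: ocp_admissible_def traj_append_seq_add)
  ultimately show ?thesis unfolding ocp_admissible_def by blast
qed

lemma cost_append:
  "cost (L + K) z (append_seq L v w)
     = (\<Sum>i<L. ell (traj F z v i) (v i)) + cost K (traj F z v L) w"
proof -
  have "(\<Sum>i<L. ell (traj F z (append_seq L v w) i) (append_seq L v w i))
      = (\<Sum>i<L. ell (traj F z v i) (v i))"
    by (intro sum.cong) (simp_all add: traj_append_seq_le append_seq_def)
  then show ?thesis
    unfolding ocp_cost_def sum_lessThan_add by (simp add: traj_append_seq_add append_seq_def)
qed

text \<open>\<open>fst (snd (F z v))\<close> is the applied input; as \<open>\<gamma> + \<delta> \<in> {0, 1}\<close>, the two input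
  terms of the stage cost collapse to its \<open>R\<close>-weight.\<close>
lemma stage_cost_eq:
  assumes "v \<in> U"
  shows "ell z v = qf Q (fst z) + qf R (fst (snd (F z v)))
                   + \<psi> * (real_of_int b ^ 2 - real_of_int (snd (snd z)) ^ 2)"
proof -
  obtain xp us \<beta> uc \<gamma> \<delta> where z: "z = (xp, us, \<beta>)" and v: "v = (uc, \<gamma>, \<delta>)"
    by (cases z, cases v) auto
  from assms have "(\<gamma> = 0 \<and> \<delta> = 0) \<or> (\<gamma> = 1 \<and> \<delta> = 0) \<or> (\<gamma> = 0 \<and> \<delta> = 1)"
    by (auto simp: v input_set_def)
  then show ?thesis by (elim disjE) (simp_all add: z v stage_cost_def dyn_def)
qed

end

locale token_bucket_mpc = ocp_data fp Xp Up Q R g c b \<psi> \<sigma> Xfp Vfp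
  for fp :: "real^'n \<Rightarrow> real^'m \<Rightarrow> real^'n"
    and Xp Up Q R g c b \<psi> \<sigma> Xfp Vfp +
  fixes q :: nat and kp :: "real^'n \<Rightarrow> real^'m"
  assumes Up0: "0 \<in> Up"
    and QR: "pos_def_mat Q" "pos_def_mat R"
    and gcb: "g \<ge> 1" "c \<ge> g" "b \<ge> c"
    and q_def: "q = nat \<lceil>real_of_int c / real_of_int g\<rceil>"
    and q2: "q \<ge> 2"
    and psi: "\<psi> > 0"
    and A1: "Xfp \<subseteq> Xp"
      "\<forall>xp\<in>Xfp. kp xp \<in> Up"
      "\<forall>xp\<in>Xfp. (\<forall>i\<in>{1..q-1}. fpi fp i xp (kp xp) \<in> Xp) \<and> fpi fp q xp (kp xp) \<in> Xfp"
    and A2: "pos_def_fun Xfp Vfp"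
      "\<forall>xp\<in>Xfp. Vfp (fpi fp q xp (kp xp)) - Vfp xp
          \<le> - real q * qf R (kp xp) - (\<Sum>i<q. qf Q (fpi fp i xp (kp xp)))"
    and A4: "\<sigma> > 0"
      "\<sigma> \<ge> \<psi> * (real q * real_of_int b ^ 2
               - 1/6 * real_of_int g ^ 2 * (real q - 1) * (real q - 2) * (2 * real q - 3))"
begin

lemma pred_q_mult_g_less_c: "(real q - 1) * real_of_int g < real_of_int c"
proof -
  have "real q = real_of_int \<lceil>real_of_int c / real_of_int g\<rceil>"
    using q_def gcb by simp
  then have "real q - 1 < real_of_int c / real_of_int g" by linarith
  then show ?thesis using gcb by (simp add: field_simps)
qed

lemma token_level_bounds: "0 \<le> \<beta> \<Longrightarrow> \<beta> \<le> b \<Longrightarrow> 0 \<le> token_level g b \<beta> i \<and> token_level g b \<beta> i \<le> b"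
  using gcb by (auto simp: token_level_def)

lemma token_level_lower_bound:
  assumes "0 \<le> \<beta>" "i < q"
  shows "real (i - 1) * real_of_int g \<le> real_of_int (token_level g b \<beta> i)"
proof (cases "i = 0")
  case False
  have "real (i - 1) * real_of_int g \<le> (real q - 1) * real_of_int g"
    using assms gcb by (intro mult_right_mono) auto
  with pred_q_mult_g_less_c gcb have "real (i - 1) * real_of_int g \<le> real_of_int b" by linarith
  moreover have "real (i - 1) * real_of_int g \<le> real_of_int (\<beta> + (int i - 1) * g)"
    using False assms by (simp add: of_nat_diff)
  ultimately show ?thesis using False by (simp add: token_level_def min_def)
qed (simp add: token_level_def assms)

lemma token_deficit_sum_le:
  assumes "0 \<le> \<beta>"
  shows "(\<Sum>i<q. real_of_int b ^ 2 - real_of_int (token_level g b \<beta> i) ^ 2)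
    \<le> real q * real_of_int b ^ 2
       - 1/6 * real_of_int g ^ 2 * (real q - 1) * (real q - 2) * (2 * real q - 3)"
proof -
  have "(\<Sum>i<q. real_of_int b ^ 2 - real_of_int (token_level g b \<beta> i) ^ 2)
     \<le> (\<Sum>i<q. real_of_int b ^ 2 - (real (i - 1) * real_of_int g) ^ 2)"
    using assms gcb by (intro sum_mono diff_left_mono power_mono token_level_lower_bound) auto
  also have "\<dots> = real q * real_of_int b ^ 2 - real_of_int g ^ 2 * (\<Sum>i<q. real (i - 1) ^ 2)"
    by (simp add: sum_subtractf sum_distrib_left power_mult_distrib mult.commute)
  also have "\<dots> = real q * real_of_int b ^ 2
       - 1/6 * real_of_int g ^ 2 * (real q - 1) * (real q - 2) * (2 * real q - 3)"
    by (subst sum_squares_pred) (use q2 in simp_all)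
  finally show ?thesis .
qed

lemma token_level_q_gain: "\<beta> < b \<Longrightarrow> \<beta> + 1 \<le> token_level g b \<beta> q"
proof -
  have "1 * 1 \<le> (int q - 1) * g" using q2 gcb by (intro mult_mono) auto
  then show "\<beta> < b \<Longrightarrow> ?thesis" using q2 by (simp add: token_level_def)
qed

lemma token_penalty_le_terminal_decrease:
  assumes "0 \<le> \<beta>" "\<beta> \<le> b"
  shows "\<psi> * (\<Sum>i<q. real_of_int b ^ 2 - real_of_int (token_level g b \<beta> i) ^ 2)
           \<le> \<sigma> * (real_of_int (token_level g b \<beta> q) ^ 2 - real_of_int \<beta> ^ 2)"
proof (cases "\<beta> = b")
  case True
  then have "token_level g b \<beta> i = b" for i
    using gcb by (simp add: token_level_def)
  with True show ?thesis by simp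
next
  case False
  have "\<psi> * (\<Sum>i<q. real_of_int b ^ 2 - real_of_int (token_level g b \<beta> i) ^ 2) \<le> \<sigma>"
    using mult_left_mono[OF token_deficit_sum_le[OF assms(1)], of \<psi>] psi A4(2) by linarith
  moreover have "(real_of_int \<beta> + 1) ^ 2 \<le> real_of_int (token_level g b \<beta> q) ^ 2"
    using token_level_q_gain[of \<beta>] False assms by (intro power_mono) auto
  then have "1 \<le> real_of_int (token_level g b \<beta> q) ^ 2 - real_of_int \<beta> ^ 2"
    using assms by (simp add: power2_sum)
  then have "\<sigma> \<le> \<sigma> * (real_of_int (token_level g b \<beta> q) ^ 2 - real_of_int \<beta> ^ 2)"
    using A4(1) by (metis less_imp_le mult.right_neutral mult_left_mono)
  ultimately show ?thesis by linarith
qed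

text \<open>The \<open>0\<close> in the hold input \<open>(0, 0, 0)\<close> is arbitrary: with \<open>\<gamma> = \<delta> = 0\<close> the held
  input is applied.\<close>
definition terminal_block :: "('n,'m) st \<Rightarrow> nat \<Rightarrow> 'm inp" where
  "terminal_block z i = (if i = 0 then (kp (fst z), 0, 1) else (0, 0, 0))"

lemma traj_terminal_block:
  "traj F (xp, us, \<beta>) (terminal_block (xp, us, \<beta>)) i
     = (fpi fp i xp (kp xp), if i = 0 then us else kp xp, token_level g b \<beta> i)"
proof (induction i)
  case (Suc i)
  have "min (min (\<beta> + (int i - 1) * g) b + g) b = min (\<beta> + int i * g) b"
    using gcb by (auto simp: min_def algebra_simps)
  with Suc show ?case
    by (simp add: fpi_def token_level_def dyn_def terminal_block_def Let_def)
qed (simp add: fpi_def token_level_def)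

lemma terminal_block_in_input_set: "fst z \<in> Xfp \<Longrightarrow> terminal_block z i \<in> U"
  using A1(2) Up0 by (simp add: terminal_block_def input_set_def)

lemma terminal_block_admissible:
  assumes "z \<in> Xf"
  shows "admissible q z (terminal_block z)"
proof -
  obtain xp us \<beta> where z: "z = (xp, us, \<beta>)" and xp: "xp \<in> Xfp" "us \<in> Up" "0 \<le> \<beta>" "\<beta> \<le> b"
    using assms by (cases z) (auto simp: state_set_def)
  have "kp xp \<in> Up" "\<forall>i\<in>{1..q-1}. fpi fp i xp (kp xp) \<in> Xp" "fpi fp q xp (kp xp) \<in> Xfp"
    using A1 xp by auto
  moreover have "xp \<in> Xp" using A1(1) xp by auto
  ultimately show ?thesis
    using q2 xp token_level_bounds[OF xp(3,4)] terminal_block_in_input_set[of z]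
    by (auto simp: z ocp_admissible_def traj_terminal_block state_set_def fpi_def)
qed

lemma terminal_block_cost:
  assumes "z \<in> Xf"
  shows "cost q z (terminal_block z) \<le> Vf z"
proof -
  obtain xp us \<beta> where z: "z = (xp, us, \<beta>)" and xp: "xp \<in> Xfp" "0 \<le> \<beta>" "\<beta> \<le> b"
    using assms by (cases z) (auto simp: state_set_def)
  have "ell (traj F z (terminal_block z) i) (terminal_block z i)
      = qf Q (fpi fp i xp (kp xp)) + qf R (kp xp)
        + \<psi> * (real_of_int b ^ 2 - real_of_int (token_level g b \<beta> i) ^ 2)" for i
  proof -
    have "ell (traj F z (terminal_block z) i) (terminal_block z i)
        = qf Q (fst (traj F z (terminal_block z) i))
          + qf R (fst (snd (traj F z (terminal_block z) (Suc i))))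
          + \<psi> * (real_of_int b ^ 2 - real_of_int (snd (snd (traj F z (terminal_block z) i))) ^ 2)"
      using xp by (simp add: stage_cost_eq terminal_block_in_input_set z)
    then show ?thesis by (simp only: z traj_terminal_block) simp
  qed
  then have "cost q z (terminal_block z)
      = (\<Sum>i<q. qf Q (fpi fp i xp (kp xp))) + real q * qf R (kp xp)
        + \<psi> * (\<Sum>i<q. real_of_int b ^ 2 - real_of_int (token_level g b \<beta> i) ^ 2)
        + Vfp (fpi fp q xp (kp xp))
        + \<sigma> * (real_of_int b ^ 2 - real_of_int (token_level g b \<beta> q) ^ 2)"
    by (simp add: ocp_cost_def z traj_terminal_block term_cost_def sum.distrib sum_distrib_left)
  with A2(2) xp token_penalty_le_terminal_decrease[OF xp(2,3)] show ?thesis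
    by (fastforce simp: z term_cost_def algebra_simps)
qed

lemma terminal_blocks:
  assumes "z \<in> Xf"
  obtains w where "admissible (n * q) z w" "cost (n * q) z w \<le> Vf z"
  using assms
proof (induction n arbitrary: z thesis)
  case 0
  then show ?case
    using "0.prems"(1)[of undefined] by (simp add: ocp_admissible_def ocp_cost_def)
next
  case (Suc n)
  let ?v = "terminal_block z"
  let ?z' = "traj F z ?v q"
  have block: "admissible q z ?v" "cost q z ?v \<le> Vf z"
    using Suc.prems(2) by (rule terminal_block_admissible, rule terminal_block_cost)
  then have "?z' \<in> Xf" by (simp add: ocp_admissible_def)
  then obtain w where w: "admissible (n * q) ?z' w" "cost (n * q) ?z' w \<le> Vf ?z'"
    using Suc.IH by blast
  have "cost (q + n * q) z (append_seq q ?v w)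
      = (\<Sum>i<q. ell (traj F z ?v i) (?v i)) + cost (n * q) ?z' w"
    by (rule cost_append)
  also have "\<dots> \<le> cost q z ?v"
    using w(2) by (simp add: ocp_cost_def)
  finally have "cost (q + n * q) z (append_seq q ?v w) \<le> cost q z ?v" .
  with block w(1) show ?case
    by (intro Suc.prems(1)[of "append_seq q ?v w"]) (simp_all add: admissible_append add.commute)
qed

lemma Vf_nonneg: "z \<in> Xf \<Longrightarrow> Vf z \<ge> 0"
  using A2(1) A4(1) unfolding pos_def_fun_def
  by (cases z) (fastforce simp: state_set_def term_cost_def less_imp_le power_mono
      intro!: add_nonneg_nonneg)

lemma ell_nonneg:
  assumes "z \<in> X" "v \<in> U"
  shows "ell z v \<ge> 0"
  using assms psi qf_nonneg[OF QR(1)] qf_nonneg[OF QR(2)]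
  by (cases z) (auto simp: stage_cost_eq state_set_def power_mono intro!: add_nonneg_nonneg)

lemma cost_nonneg: "admissible N z us \<Longrightarrow> cost N z us \<ge> 0"
  unfolding ocp_admissible_def ocp_cost_def
  by (intro add_nonneg_nonneg sum_nonneg ell_nonneg Vf_nonneg) auto

lemma successor_candidate:
  assumes adm: "admissible N z us" and "N \<ge> r * q"
  obtains us' where "admissible N (traj F z us (r * q)) us'"
    "cost N (traj F z us (r * q)) us' \<le> cost N z us - (\<Sum>i<r * q. ell (traj F z us i) (us i))"
proof -
  define M L where "M = r * q" and "L = N - r * q"
  then have N: "N = M + L" using \<open>N \<ge> r * q\<close> by simp
  define z' tail where "z' = traj F z us M" and "tail = (\<lambda>k. us (M + k))"
  have tail: "admissible L z' tail"
    using adm admissible_shift unfolding N z'_def tail_def by blast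
  then have "traj F z' tail L \<in> Xf" by (simp add: ocp_admissible_def)
  then obtain w where w: "admissible M (traj F z' tail L) w"
    "cost M (traj F z' tail L) w \<le> Vf (traj F z' tail L)"
    using terminal_blocks unfolding M_def by blast
  have "admissible N z' (append_seq L tail w)"
    using admissible_append[OF tail w(1)] by (simp add: N add.commute)
  moreover have "cost N z' (append_seq L tail w) \<le> cost L z' tail"
    using cost_append[of L M z' tail w] w(2) by (simp add: N add.commute ocp_cost_def)
  moreover have "cost N z us = (\<Sum>i<M. ell (traj F z us i) (us i)) + cost L z' tail"
    unfolding N z'_def tail_def by (rule cost_shift)
  ultimately show ?thesis using that unfolding M_def z'_def by fastforce
qed

end

locale rollout_mpc = token_bucket_mpc fp Xp Up Q R g c b \<psi> \<sigma> Xfp Vfp q kp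
  for fp :: "real^'n \<Rightarrow> real^'m \<Rightarrow> real^'n"
    and Xp Up Q R g c b \<psi> \<sigma> Xfp Vfp q kp +
  fixes r M N :: nat and x :: "nat \<Rightarrow> ('n,'m) st" and u :: "nat \<Rightarrow> 'm inp"
  assumes r: "r \<ge> 1" and M_def: "M = r * q" and N: "N \<ge> M"
    and loop_dyn: "\<forall>k. x (Suc k) = F (x k) (u k)"
    and loop_mpc: "\<forall>j. feasible N (x (j * M)) \<longrightarrow>
         (\<exists>us. optimal N (x (j * M)) us \<and> (\<forall>i<M. u (j * M + i) = us i))"
    and init: "feasible N (x 0)"
begin

lemma M_pos: "M > 0"
  using r q2 M_def by simp

lemma rollout_traj:
  assumes "\<forall>i<M. u (j * M + i) = us i" "i \<le> M"
  shows "x (j * M + i) = traj F (x (j * M)) us i"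
  using assms(2) by (induction i) (simp_all add: loop_dyn assms(1))

lemma rollout_feasible: "feasible N (x (j * M))"
proof (induction j)
  case 0
  show ?case using init by simp
next
  case (Suc j)
  then obtain us where us: "optimal N (x (j * M)) us" "\<forall>i<M. u (j * M + i) = us i"
    using loop_mpc by blast
  then obtain us' where "admissible N (traj F (x (j * M)) us M) us'"
    using successor_candidate[of N _ us] N M_def unfolding ocp_optimal_def by blast
  moreover have "x (Suc j * M) = traj F (x (j * M)) us M"
    using rollout_traj[OF us(2), of M] by (simp add: add.commute)
  ultimately show ?case unfolding ocp_feasible_def by auto
qed

lemma rollout_optimizers:
  obtains opt where "\<And>j. optimal N (x (j * M)) (opt j)"
    "\<And>j i. i < M \<Longrightarrow> u (j * M + i) = opt j i"
  using loop_mpc rollout_feasible by metis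

lemma rollout_constraints: "x k \<in> X \<and> u k \<in> U"
proof -
  obtain opt where opt: "\<And>j. optimal N (x (j * M)) (opt j)"
    "\<And>j i. i < M \<Longrightarrow> u (j * M + i) = opt j i"
    using rollout_optimizers by blast
  have i: "k = k div M * M + k mod M" "k mod M < M" using M_pos by simp_all
  then have "x k = traj F (x (k div M * M)) (opt (k div M)) (k mod M)"
    using rollout_traj[of "k div M" "opt (k div M)" "k mod M"] opt(2) by simp
  with i opt N show ?thesis
    unfolding ocp_optimal_def ocp_admissible_def by (metis order.strict_trans2)
qed

lemma rollout_stage_cost_summable: "summable (\<lambda>k. ell (x k) (u k))"
proof -
  obtain opt where opt: "\<And>j. optimal N (x (j * M)) (opt j)"
    "\<And>j i. i < M \<Longrightarrow> u (j * M + i) = opt j i"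
    using rollout_optimizers by blast
  define V where "V j = cost N (x (j * M)) (opt j)" for j
  have decrease: "V (Suc j) \<le> V j - (\<Sum>i<M. ell (x (j * M + i)) (u (j * M + i)))" for j
  proof -
    have x_step: "x (j * M + i) = traj F (x (j * M)) (opt j) i" if "i \<le> M" for i
      using rollout_traj[of j "opt j" i] opt(2) that by blast
    have "admissible N (x (j * M)) (opt j)" using opt(1) unfolding ocp_optimal_def by blast
    then obtain us' where us': "admissible N (traj F (x (j * M)) (opt j) (r * q)) us'"
      "cost N (traj F (x (j * M)) (opt j) (r * q)) us'
         \<le> V j - (\<Sum>i<r * q. ell (traj F (x (j * M)) (opt j) i) (opt j i))"
      unfolding V_def by (rule successor_candidate[OF _ N[unfolded M_def]])
    have x_next: "traj F (x (j * M)) (opt j) M = x (Suc j * M)"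
      using x_step[of M] by (simp add: add.commute)
    have closed_loop_sum: "(\<Sum>i<M. ell (traj F (x (j * M)) (opt j) i) (opt j i))
        = (\<Sum>i<M. ell (x (j * M + i)) (u (j * M + i)))"
      by (intro sum.cong) (simp_all add: x_step opt(2))
    have "V (Suc j) \<le> cost N (x (Suc j * M)) us'"
      using opt(1)[of "Suc j"] us'(1) x_next unfolding V_def ocp_optimal_def M_def by simp
    also have "\<dots> \<le> V j - (\<Sum>i<M. ell (x (j * M + i)) (u (j * M + i)))"
      using us'(2) x_next closed_loop_sum unfolding M_def by simp
    finally show ?thesis .
  qed
  have "V j \<ge> 0" for j
    using cost_nonneg opt(1) unfolding V_def ocp_optimal_def by blast
  moreover have "ell (x k) (u k) \<ge> 0" for k
    using ell_nonneg rollout_constraints by blast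
  ultimately show ?thesis
    by (intro summable_of_blockwise_decrease[OF M_pos _ _ decrease])
qed

lemma rollout_stage_cost_eq:
  "ell (x k) (u k) = qf Q (fst (x k)) + qf R (fst (snd (x (Suc k))))
     + \<psi> * (real_of_int b ^ 2 - real_of_int (snd (snd (x k))) ^ 2)"
  using rollout_constraints[of k] by (simp add: loop_dyn stage_cost_eq)

lemma rollout_token_level_bounds: "0 \<le> snd (snd (x k)) \<and> snd (snd (x k)) \<le> b"
  using rollout_constraints[of k] by (auto simp: state_set_def)

lemma rollout_dominated_tendsto_zero:
  fixes h :: "nat \<Rightarrow> real"
  assumes "\<And>k. 0 \<le> h k" "\<And>k. h k \<le> ell (x k) (u k)"
  shows "h \<longlonglongrightarrow> 0"
  using assms summable_LIMSEQ_zero[OF rollout_stage_cost_summable]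
  by (intro Lim_null_comparison[of h "\<lambda>k. ell (x k) (u k)"]) auto

lemma rollout_plant_state_tendsto: "(\<lambda>k. fst (x k)) \<longlonglongrightarrow> 0"
proof (rule qf_tendsto_zero_imp_tendsto_zero[OF QR(1)])
  show "(\<lambda>k. qf Q (fst (x k))) \<longlonglongrightarrow> 0"
    using QR psi rollout_token_level_bounds
    by (intro rollout_dominated_tendsto_zero)
      (auto simp: rollout_stage_cost_eq qf_nonneg power_mono)
qed

lemma rollout_held_input_tendsto: "(\<lambda>k. fst (snd (x k))) \<longlonglongrightarrow> 0"
proof -
  have "(\<lambda>k. qf R (fst (snd (x (Suc k))))) \<longlonglongrightarrow> 0"
    using QR psi rollout_token_level_bounds
    by (intro rollout_dominated_tendsto_zero)
      (auto simp: rollout_stage_cost_eq qf_nonneg power_mono)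
  then show ?thesis
    using qf_tendsto_zero_imp_tendsto_zero[OF QR(2)] LIMSEQ_imp_Suc by fastforce
qed

lemma rollout_token_level_tendsto: "(\<lambda>k. snd (snd (x k))) \<longlonglongrightarrow> b"
proof (rule int_tendsto_of_square_gap)
  have "(\<lambda>k. \<psi> * (real_of_int b ^ 2 - real_of_int (snd (snd (x k))) ^ 2)) \<longlonglongrightarrow> 0"
    using QR psi rollout_token_level_bounds
    by (intro rollout_dominated_tendsto_zero)
      (auto simp: rollout_stage_cost_eq qf_nonneg power_mono)
  then show "(\<lambda>k. real_of_int b ^ 2 - real_of_int (snd (snd (x k))) ^ 2) \<longlonglongrightarrow> 0"
    using tendsto_mult_left[of _ 0 _ "1 / \<psi>"] psi by fastforce
qed (use rollout_token_level_bounds in auto)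

lemma rollout_converges: "x \<longlonglongrightarrow> (0, 0, b)"
proof -
  have "(\<lambda>k. (fst (x k), fst (snd (x k)), snd (snd (x k)))) \<longlonglongrightarrow> (0, 0, b)"
    by (intro tendsto_Pair rollout_plant_state_tendsto rollout_held_input_tendsto
        rollout_token_level_tendsto)
  then show ?thesis by simp
qed

end

theorem theorem2:
  fixes fp :: "real^'n \<Rightarrow> real^'m \<Rightarrow> real^'n"
    and Xp :: "(real^'n) set" and Up :: "(real^'m) set"
    and Q :: "real^'n^'n" and R :: "real^'m^'m"
    and g c b :: int and q :: nat
    and \<psi> \<sigma> :: real
    and Xfp :: "(real^'n) set" and kp :: "real^'n \<Rightarrow> real^'m" and Vfp :: "real^'n \<Rightarrow> real"
    and r M N :: nat
    and x :: "nat \<Rightarrow> ('n,'m) st" and u :: "nat \<Rightarrow> 'm inp"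
  assumes fp0: "fp 0 0 = 0"
    and Xp: "closed Xp" "0 \<in> Xp"
    and Up: "closed Up" "0 \<in> Up"
    and QR: "pos_def_mat Q" "pos_def_mat R"
    and gcb: "g \<ge> 1" "c \<ge> g" "b \<ge> c"
    and q_def: "q = nat \<lceil>real_of_int c / real_of_int g\<rceil>"
    and q2: "q \<ge> 2"
    and psi: "\<psi> > 0"
    and A1: "closed Xfp" "Xfp \<subseteq> Xp" "0 \<in> Xfp"
      "\<forall>xp\<in>Xfp. kp xp \<in> Up"
      "\<forall>xp\<in>Xfp. (\<forall>i\<in>{1..q-1}. fpi fp i xp (kp xp) \<in> Xp) \<and> fpi fp q xp (kp xp) \<in> Xfp"
    and A2: "continuous_on Xfp Vfp" "pos_def_fun Xfp Vfp"
      "\<forall>xp\<in>Xfp. Vfp (fpi fp q xp (kp xp)) - Vfp xp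
          \<le> - real q * qf R (kp xp) - (\<Sum>i<q. qf Q (fpi fp i xp (kp xp)))"
    and A4: "\<sigma> > 0"
      "\<sigma> \<ge> \<psi> * (real q * real_of_int b ^ 2
               - 1/6 * real_of_int g ^ 2 * (real q - 1) * (real q - 2) * (2 * real q - 3))"
    and r: "r \<ge> 1" and M_def: "M = r * q" and N: "N \<ge> M"
    and loop_dyn: "\<forall>k. x (Suc k) = dyn fp g c b (x k) (u k)"
    and loop_mpc: "\<forall>j. ocp_feasible fp g c b Xp Up Xfp N (x (j * M)) \<longrightarrow>
         (\<exists>us. ocp_optimal fp g c b Xp Up Xfp Q R \<psi> Vfp \<sigma> N (x (j * M)) us
               \<and> (\<forall>i<M. u (j * M + i) = us i))"
    and init: "ocp_feasible fp g c b Xp Up Xfp N (x 0)"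
  shows "(\<forall>j. ocp_feasible fp g c b Xp Up Xfp N (x (j * M)))
         \<and> (x \<longlonglongrightarrow> (0, 0, b))"
proof -
  interpret rollout_mpc fp Xp Up Q R g c b \<psi> \<sigma> Xfp Vfp q kp r M N x u
    by unfold_locales
      (fact Up(2) QR gcb q_def q2 psi A1(2) A1(4) A1(5) A2(2) A2(3) A4 r M_def N
        loop_dyn loop_mpc init)+
  show ?thesis using rollout_feasible rollout_converges by blast
qed

end
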